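(* Let $A<\mathbb{R}$ be any subring and let $p\in\mathbb{P}^1\setminus\{\infty\}$. Then $\mathrm{PSL}_2(A)\cdot p\subseteq\{\infty\}\cup H(A)\cdot p$. Consequently, the orbit equivalence relations induced by the actions of $\mathrm{PSL}_2(A)$ and of $H(A)$ on $\mathbb{P}^1$ coincide when restricted to $\mathbb{P}^1\setminus\{\infty\}$.
   Context: Let $\mathbb{P}^1=\mathbb{P}^1(\mathbb{R})$ with its usual topology (a circle) and the natural action of $\mathrm{PSL}_2(\mathbb{R})$. Let $G$ be the group of homeomorphisms of $\mathbb{P}^1$ which are piecewise in $\mathrm{PSL}_2(\mathbb{R})$ with finitely many pieces, each an interval. Let $\infty\in\mathbb{P}^1$ correspond to the first basis vector of $\mathbb{R}^2$ and $H<G$ its stabilizer. For a subring $A<\mathbb{R}$, $P_A$ is the set of fixed points of hyperbolic elements (trace of absolute value $>2$) of $\mathrm{PSL}_2(A)$, $G(A)$ is the subgroup of $G$ of elements piecewise in $\mathrm{PSL}_2(A)$ with all interval endpoints in $P_A$, and $H(A)=G(A)\cap H$. *)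

theory Defs
  imports Complex_Main
begin

text \<open>The real projective line: affine coordinate x corresponds to [x:1];
  Inf corresponds to [1:0], the first basis vector.\<close>
datatype P1 = Inf | Fin real

definition real_subring :: "real set \<Rightarrow> bool" where
  "real_subring A \<longleftrightarrow> 0 \<in> A \<and> 1 \<in> A \<and>
     (\<forall>x\<in>A. \<forall>y\<in>A. x + y \<in> A \<and> x - y \<in> A \<and> x * y \<in> A)"

text \<open>A 2x2 matrix (a,b,c,d) = [[a,b],[c,d]].  SL2 A is the set of matrices
  with entries in A and determinant 1; its action on P1 factors through PSL2(A).\<close>
type_synonym mat2 = "real \<times> real \<times> real \<times> real"

definition SL2 :: "real set \<Rightarrow> mat2 set" where
  "SL2 A = {(a,b,c,d). a \<in> A \<and> b \<in> A \<and> c \<in> A \<and> d \<in> A \<and> a * d - b * c = 1}"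

fun mtrace :: "mat2 \<Rightarrow> real" where
  "mtrace (a,b,c,d) = a + d"

text \<open>Projective action: [x:y] maps to [ax+by : cx+dy].\<close>
fun mob :: "mat2 \<Rightarrow> P1 \<Rightarrow> P1" where
  "mob (a,b,c,d) Inf = (if c = 0 then Inf else Fin (a / c))"
| "mob (a,b,c,d) (Fin x) =
     (if c * x + d = 0 then Inf else Fin ((a * x + b) / (c * x + d)))"

text \<open>P_A: fixed points of hyperbolic elements of PSL2(A).\<close>
definition PA :: "real set \<Rightarrow> P1 set" where
  "PA A = {p. \<exists>M\<in>SL2 A. \<bar>mtrace M\<bar> > 2 \<and> mob M p = p}"

text \<open>Closed arc of the circle P1 from u to v, traversed in the direction of
  increasing affine coordinate (passing through Inf when wrapping around).\<close>
fun arc :: "P1 \<Rightarrow> P1 \<Rightarrow> P1 set" where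
  "arc (Fin a) (Fin b) =
     (if a \<le> b then Fin ` {a..b} else insert Inf (Fin ` ({a..} \<union> {..b})))"
| "arc (Fin a) Inf = insert Inf (Fin ` {a..})"
| "arc Inf (Fin b) = insert Inf (Fin ` {..b})"
| "arc Inf Inf = UNIV"

text \<open>G(A): bijections of P1 that are piecewise in PSL2(A) on finitely many closed
  arcs with endpoints in P_A (agreement on the closed arcs gives continuity, so these
  are exactly the homeomorphisms described in the paper); a single global piece is
  also allowed.\<close>
definition GA :: "real set \<Rightarrow> (P1 \<Rightarrow> P1) set" where
  "GA A = {g. bij g \<and>
     ((\<exists>M\<in>SL2 A. g = mob M) \<or>
      (\<exists>ps. 2 \<le> length ps \<and> distinct ps \<and> set ps \<subseteq> PA A \<and>
         (\<forall>i<length ps. \<exists>M\<in>SL2 A.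
            \<forall>x\<in>arc (ps ! i) (ps ! (Suc i mod length ps)). g x = mob M x)))}"

definition HA :: "real set \<Rightarrow> (P1 \<Rightarrow> P1) set" where
  "HA A = {g \<in> GA A. g Inf = Inf}"

end

theory Submission
  imports Defs
begin

text \<open>Let \<open>M = (a, b, c, d) \<in> SL2 A\<close> with \<open>M x\<close> finite; if \<open>c = 0\<close> then \<open>M\<close> itself fixes \<open>Inf\<close>.
  Otherwise choose an integer \<open>n\<close> such that \<open>x\<close> lies strictly between the two real solutions
  \<open>s < t\<close> of \<open>M y = y + n\<close>; these are the fixed points of the hyperbolic element \<open>M\<inverse> T\<^sub>n\<close>
  of \<open>SL2 A\<close>, \<open>T\<^sub>n\<close> the translation by \<open>n\<close>, hence they lie in \<open>PA A\<close>. Having no pole on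
  \<open>[s, t]\<close>, \<open>M\<close> maps it increasingly onto \<open>[s + n, t + n] = T\<^sub>n [s, t]\<close>, so the map that is \<open>M\<close>
  on \<open>[s, t]\<close> and \<open>T\<^sub>n\<close> on the complementary arc is a homeomorphism in \<open>HA A\<close> agreeing with
  \<open>M\<close> at \<open>x\<close>. Conversely, an element of \<open>GA A\<close> agrees at \<open>x\<close> with the matrix of a piece
  whose arc contains \<open>x\<close>.\<close>

lemma mob_adj_mob:
  assumes det: "a * d - b * c = 1"
  shows "mob (d, -b, -c, a) (mob (a, b, c, d) z) = z"
proof (cases z)
  case Inf
  then show ?thesis by (cases "c = 0") simp_all
next
  case (Fin y)
  show ?thesis
  proof (cases "c * y + d = 0")
    case True
    then have "c \<noteq> 0" using det by auto
    with True show ?thesis using Fin by (simp add: field_simps)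
  next
    case False
    have "- c * (a * y + b) + a * (c * y + d) = 1" and "d * (a * y + b) - b * (c * y + d) = y"
      using det by (simp_all add: algebra_simps) (metis mult_1 distrib_right mult.assoc)
    with False show ?thesis using Fin by (simp add: field_simps)
  qed
qed

lemma bij_mob_SL2:
  assumes "M \<in> SL2 A"
  shows "bij (mob M)"
proof -
  obtain a b c d where M: "M = (a, b, c, d)" and det: "a * d - b * c = 1"
    using assms by (auto simp: SL2_def)
  have det': "d * a - (- b) * (- c) = 1" using det by (simp add: algebra_simps)
  show ?thesis unfolding M
    using mob_adj_mob[OF det] mob_adj_mob[OF det']
    by (intro o_bij[where g = "mob (d, - b, - c, a)"]) (auto simp: fun_eq_iff)
qed

lemma mob_fixed_iff:
  assumes det: "a * d - b * c = 1"
  shows "mob (a, b, c, d) (Fin r) = Fin r \<longleftrightarrow> c * r\<^sup>2 + (d - a) * r - b = 0"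
proof (cases "c * r + d = 0")
  case True
  then have "d = - c * r" by simp
  then have "- c * (a * r + b) = 1" using det by (simp add: algebra_simps)
  moreover have "c * r\<^sup>2 + (d - a) * r - b = r * (c * r + d) - (a * r + b)"
    by (simp add: algebra_simps power2_eq_square)
  ultimately have "c * r\<^sup>2 + (d - a) * r - b \<noteq> 0" using True by auto
  with True show ?thesis by simp
next
  case False
  then show ?thesis by (auto simp: field_simps power2_eq_square)
qed

lemma hyperbolic_if_two_fixed_points:
  assumes det: "a * d - b * c = 1" and "c \<noteq> 0" and "s \<noteq> t"
    and fix_s: "mob (a, b, c, d) (Fin s) = Fin s" and fix_t: "mob (a, b, c, d) (Fin t) = Fin t"
  shows "2 < \<bar>a + d\<bar>"
proof -
  have qs: "c * s\<^sup>2 + (d - a) * s - b = 0" and qt: "c * t\<^sup>2 + (d - a) * t - b = 0"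
    using fix_s fix_t mob_fixed_iff[OF det] by blast+
  have "(s - t) * (c * (s + t) + d - a) = 0"
    using qs qt by (simp add: algebra_simps power2_eq_square)
  then have sum: "c * (s + t) = a - d" using \<open>s \<noteq> t\<close> by simp
  have "b = c * s\<^sup>2 + (d - a) * s" using qs by simp
  also have "d - a = - c * (s + t)" using sum by simp
  finally have prod: "b = - c * s * t" by (simp add: algebra_simps power2_eq_square)
  have "(a + d)\<^sup>2 - 4 = (a - d)\<^sup>2 + 4 * b * c"
    using det by (simp add: algebra_simps power2_eq_square)
  also have "\<dots> = c\<^sup>2 * (s - t)\<^sup>2"
    unfolding sum[symmetric] prod by (simp add: algebra_simps power2_eq_square)
  also have "\<dots> > 0" using \<open>c \<noteq> 0\<close> \<open>s \<noteq> t\<close> by simp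
  finally have "2\<^sup>2 < \<bar>a + d\<bar>\<^sup>2" by simp
  then show ?thesis using power_less_imp_less_base by fastforce
qed

lemma linear_same_sign_if_no_root:
  fixes c d u v :: real
  assumes "u \<le> v" and no_root: "\<forall>z\<in>{u..v}. c * z + d \<noteq> 0"
  shows "0 < (c * u + d) * (c * v + d)"
proof (rule ccontr)
  assume "\<not> ?thesis"
  then have "c * u + d \<le> 0 \<and> 0 \<le> c * v + d \<or> 0 \<le> c * u + d \<and> c * v + d \<le> 0"
    by (auto simp: zero_less_mult_iff)
  moreover have "continuous_on {u..v} (\<lambda>z. c * z + d)" by (intro continuous_intros)
  ultimately obtain z where "u \<le> z" "z \<le> v" "c * z + d = 0"
    using IVT'[of "\<lambda>z. c * z + d" u 0 v] IVT2'[of "\<lambda>z. c * z + d" v 0 u] \<open>u \<le> v\<close> by blast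
  then show False using no_root by auto
qed

lemma mono_on_mob_if_no_pole:
  fixes a b c d u v :: real
  assumes det: "a * d - b * c = 1" and no_pole: "\<forall>y\<in>{u..v}. c * y + d \<noteq> 0"
  shows "mono_on {u..v} (\<lambda>y. (a * y + b) / (c * y + d))"
proof (rule mono_onI)
  fix y y' assume y: "y \<in> {u..v}" "y' \<in> {u..v}" "y \<le> y'"
  have pos: "0 < (c * y' + d) * (c * y + d)"
    using linear_same_sign_if_no_root[of y y' c d] no_pole y by (auto simp: mult.commute)
  then have "c * y' + d \<noteq> 0" "c * y + d \<noteq> 0" by auto
  then have "(a * y' + b) / (c * y' + d) - (a * y + b) / (c * y + d)
      = ((a * y' + b) * (c * y + d) - (a * y + b) * (c * y' + d)) / ((c * y' + d) * (c * y + d))"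
    by (simp add: diff_frac_eq)
  also have "\<dots> = ((a * d - b * c) * (y' - y)) / ((c * y' + d) * (c * y + d))"
    by (simp add: algebra_simps)
  also have "\<dots> \<ge> 0" using det pos y by simp
  finally show "(a * y + b) / (c * y + d) \<le> (a * y' + b) / (c * y' + d)" by simp
qed

lemma quadratic_at_pole:
  fixes a b c d n y :: real
  assumes det: "a * d - b * c = 1" and "c * y + d = 0"
  shows "c * ((c * y + d) * (y + n) - (a * y + b)) = 1"
proof -
  have "d = - c * y" using \<open>c * y + d = 0\<close> by simp
  then have "c * ((c * y + d) * (y + n) - (a * y + b)) = a * d - b * c"
    by (simp add: algebra_simps)
  with det show ?thesis by simp
qed

lemma mob_maps_interval:
  fixes a b c d n u v :: real
  assumes det: "a * d - b * c = 1"
    and nonpos: "\<forall>y\<in>{u..v}. c * ((c * y + d) * (y + n) - (a * y + b)) \<le> 0"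
    and fix_u: "(c * u + d) * (u + n) = a * u + b" and fix_v: "(c * v + d) * (v + n) = a * v + b"
  shows "mob (a, b, c, d) ` Fin ` {u..v} \<subseteq> Fin ` {u + n..v + n}"
proof clarify
  fix y assume y: "y \<in> {u..v}"
  have no_pole: "\<forall>y\<in>{u..v}. c * y + d \<noteq> 0"
    using nonpos quadratic_at_pole[OF det] by fastforce
  then have "c * u + d \<noteq> 0" "c * v + d \<noteq> 0" "c * y + d \<noteq> 0" using y by auto
  then have ends: "(a * u + b) / (c * u + d) = u + n" "(a * v + b) / (c * v + d) = v + n"
    using fix_u fix_v by (simp_all add: field_simps)
  have "(a * u + b) / (c * u + d) \<le> (a * y + b) / (c * y + d)"
    and "(a * y + b) / (c * y + d) \<le> (a * v + b) / (c * v + d)"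
    using mono_onD[OF mono_on_mob_if_no_pole[OF det no_pole]] y by auto
  then show "mob (a, b, c, d) (Fin y) \<in> Fin ` {u + n..v + n}"
    using ends \<open>c * y + d \<noteq> 0\<close> by simp
qed

lemma mob_maps_interval_onto:
  fixes a b c d n s t :: real
  assumes det: "a * d - b * c = 1"
    and nonpos: "\<forall>y\<in>{s..t}. c * ((c * y + d) * (y + n) - (a * y + b)) \<le> 0"
    and fix_s: "(c * s + d) * (s + n) = a * s + b" and fix_t: "(c * t + d) * (t + n) = a * t + b"
  shows "mob (a, b, c, d) ` Fin ` {s..t} = Fin ` {s + n..t + n}"
proof
  show "mob (a, b, c, d) ` Fin ` {s..t} \<subseteq> Fin ` {s + n..t + n}"
    using mob_maps_interval[OF det nonpos fix_s fix_t] .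
  have det': "d * a - (- b) * (- c) = 1" using det by (simp add: algebra_simps)
  \<comment> \<open>the quadratic attached to the inverse and the translation by \<open>- n\<close> is the old one shifted by \<open>n\<close>\<close>
  have shift: "- c * ((- c * w + a) * (w + - n) - (d * w + - b))
      = c * ((c * (w - n) + d) * (w - n + n) - (a * (w - n) + b))" for w
    by (simp add: algebra_simps)
  have "mob (d, - b, - c, a) ` Fin ` {s + n..t + n} \<subseteq> Fin ` {s + n + - n..t + n + - n}"
  proof (rule mob_maps_interval[OF det'])
    show "\<forall>w\<in>{s + n..t + n}. - c * ((- c * w + a) * (w + - n) - (d * w + - b)) \<le> 0"
    proof
      fix w assume "w \<in> {s + n..t + n}"
      then have "w - n \<in> {s..t}" by auto
      then show "- c * ((- c * w + a) * (w + - n) - (d * w + - b)) \<le> 0"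
        unfolding shift using nonpos by blast
    qed
    show "(- c * (s + n) + a) * (s + n + - n) = d * (s + n) + - b"
      using fix_s by (simp add: algebra_simps)
    show "(- c * (t + n) + a) * (t + n + - n) = d * (t + n) + - b"
      using fix_t by (simp add: algebra_simps)
  qed
  then have inverse_maps: "mob (d, - b, - c, a) ` Fin ` {s + n..t + n} \<subseteq> Fin ` {s..t}" by simp
  show "Fin ` {s + n..t + n} \<subseteq> mob (a, b, c, d) ` Fin ` {s..t}"
  proof
    fix w assume "w \<in> Fin ` {s + n..t + n}"
    then have "mob (d, - b, - c, a) w \<in> Fin ` {s..t}" using inverse_maps by blast
    moreover have "w = mob (a, b, c, d) (mob (d, - b, - c, a) w)"
      using mob_adj_mob[OF det'] by simp
    ultimately show "w \<in> mob (a, b, c, d) ` Fin ` {s..t}" by blast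
  qed
qed

lemma negative_quadratic_splits:
  fixes \<alpha> \<beta> \<gamma> x :: real
  assumes "0 < \<alpha>" and neg: "\<alpha> * x\<^sup>2 + \<beta> * x + \<gamma> < 0"
  obtains s t where "s < x" "x < t" "\<And>y. \<alpha> * y\<^sup>2 + \<beta> * y + \<gamma> = \<alpha> * (y - s) * (y - t)"
proof -
  define D where "D = \<beta>\<^sup>2 - 4 * \<alpha> * \<gamma>"
  have "(2 * \<alpha> * x + \<beta>)\<^sup>2 = 4 * \<alpha> * (\<alpha> * x\<^sup>2 + \<beta> * x + \<gamma>) + D"
    by (simp add: D_def algebra_simps power2_eq_square)
  moreover have "4 * \<alpha> * (\<alpha> * x\<^sup>2 + \<beta> * x + \<gamma>) < 0"
    using \<open>0 < \<alpha>\<close> neg by (simp add: mult_pos_neg)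
  ultimately have "0 < D" by (metis zero_le_power2 add_less_same_cancel2 order_le_less_trans)
  define s where "s = (- \<beta> - sqrt D) / (2 * \<alpha>)"
  define t where "t = (- \<beta> + sqrt D) / (2 * \<alpha>)"
  have split: "\<alpha> * y\<^sup>2 + \<beta> * y + \<gamma> = \<alpha> * (y - s) * (y - t)" for y
  proof -
    have "sqrt D * sqrt D = D" using \<open>0 < D\<close> by simp
    then show ?thesis using \<open>0 < \<alpha>\<close>
      by (simp add: s_def t_def D_def field_simps power2_eq_square)
  qed
  have "s < t" using \<open>0 < D\<close> \<open>0 < \<alpha>\<close> by (simp add: s_def t_def divide_strict_right_mono)
  moreover have "(x - s) * (x - t) < 0"
    using neg split[of x] \<open>0 < \<alpha>\<close> by (simp add: mult.assoc mult_less_0_iff)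
  ultimately have "s < x" "x < t" by (auto simp: mult_less_0_iff)
  then show thesis using split by (rule that)
qed

lemma of_int_mem_real_subring:
  assumes "real_subring A"
  shows "of_int k \<in> A"
  by (induction k rule: int_induct[where k = 0]) (use assms in \<open>simp_all add: real_subring_def\<close>)

lemma ex_int_add_mult_neg:
  fixes K m :: real
  assumes "m \<noteq> 0"
  shows "\<exists>n::int. K + of_int n * m < 0"
proof -
  obtain k :: nat where "\<bar>K\<bar> / \<bar>m\<bar> < real k" using reals_Archimedean2 by blast
  then have km: "\<bar>K\<bar> < real k * \<bar>m\<bar>" using assms by (simp add: divide_less_eq)
  show ?thesis
  proof (cases "m > 0")
    case True
    then have "K + of_int (- int k) * m < 0" using km by simp
    then show ?thesis by blast
  next
    case False
    then have "K + of_int (int k) * m < 0" using km assms by simp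
    then show ?thesis by blast
  qed
qed

lemma bij_glue:
  assumes "bij f" "bij h" "f ` I = h ` I"
  shows "bij (\<lambda>z. if z \<in> I then f z else h z)" (is "bij ?g")
proof -
  have "bij_betw f I (f ` I)" "bij_betw h (- I) (h ` (- I))"
    using assms(1,2) bij_betw_subset by blast+
  moreover have "h ` (- I) = - f ` I" using bij_image_Compl_eq[OF assms(2)] assms(3) by simp
  ultimately have "bij_betw ?g I (f ` I)" "bij_betw ?g (- I) (- f ` I)"
    using bij_betw_cong[of I ?g f] bij_betw_cong[of "- I" ?g h] by simp_all
  from bij_betw_combine[OF this] show ?thesis by simp
qed

lemma mob_translation_interval: "mob (1, n, 0, 1) ` Fin ` {u..v} = Fin ` {u + n..v + n}"
  by (simp add: image_image flip: image_add_atLeastAtMost')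

lemma glued_translation_in_HA:
  assumes A: "real_subring A" and M: "M \<in> SL2 A" and "n \<in> A" and "s < t"
    and PA: "Fin s \<in> PA A" "Fin t \<in> PA A"
    and image: "mob M ` Fin ` {s..t} = Fin ` {s + n..t + n}"
    and ends: "mob M (Fin s) = Fin (s + n)" "mob M (Fin t) = Fin (t + n)"
  shows "(\<lambda>z. if z \<in> Fin ` {s..t} then mob M z else mob (1, n, 0, 1) z) \<in> HA A"
    (is "?g \<in> HA A")
proof -
  let ?T = "(1, n, 0, 1)"
  have T: "?T \<in> SL2 A" using A \<open>n \<in> A\<close> by (simp add: SL2_def real_subring_def)
  have "bij ?g"
    using bij_glue[OF bij_mob_SL2[OF M] bij_mob_SL2[OF T]] image mob_translation_interval by simp
  moreover have "\<exists>N\<in>SL2 A. \<forall>z\<in>arc (Fin s) (Fin t). ?g z = mob N z"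
    using M \<open>s < t\<close> by auto
  moreover have "\<exists>N\<in>SL2 A. \<forall>z\<in>arc (Fin t) (Fin s). ?g z = mob N z"
  proof (intro bexI ballI)
    fix z assume "z \<in> arc (Fin t) (Fin s)"
    then have "z \<in> Fin ` {s..t} \<Longrightarrow> z = Fin s \<or> z = Fin t" using \<open>s < t\<close> by auto
    then show "?g z = mob ?T z" using ends by auto
  qed (rule T)
  ultimately have pieces: "\<forall>i<length [Fin s, Fin t]. \<exists>N\<in>SL2 A.
      \<forall>z\<in>arc ([Fin s, Fin t] ! i) ([Fin s, Fin t] ! (Suc i mod length [Fin s, Fin t])). ?g z = mob N z"
    by (simp add: less_Suc_eq)
  have "2 \<le> length [Fin s, Fin t]" "distinct [Fin s, Fin t]" "set [Fin s, Fin t] \<subseteq> PA A"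
    using PA \<open>s < t\<close> by simp_all
  with \<open>bij ?g\<close> pieces have "?g \<in> GA A" unfolding GA_def by blast
  moreover have "?g Inf = Inf" by auto
  ultimately show ?thesis by (simp add: HA_def)
qed

lemma translation_fixed_points_in_PA:
  assumes A: "real_subring A" and M: "(a, b, c, d) \<in> SL2 A" and "n \<in> A" and "c \<noteq> 0" and "s \<noteq> t"
    and root_s: "(c * s + d) * (s + n) = a * s + b" and root_t: "(c * t + d) * (t + n) = a * t + b"
  shows "Fin s \<in> PA A" "Fin t \<in> PA A"
proof -
  \<comment> \<open>\<open>B\<close> is \<open>M\<inverse>\<close> after translation by \<open>n\<close>, so it fixes exactly the solutions of \<open>M r = r + n\<close>\<close>
  define B where "B = (d, d * n - b, - c, a - c * n)"
  have det: "a * d - b * c = 1" using M by (simp add: SL2_def)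
  then have det_B: "d * (a - c * n) - (d * n - b) * (- c) = 1" by (simp add: algebra_simps)
  have "- c \<in> A" using A M by (auto simp: SL2_def real_subring_def dest: bspec[of _ _ 0])
  then have B: "B \<in> SL2 A" using A M \<open>n \<in> A\<close> det_B by (auto simp: B_def SL2_def real_subring_def)
  have fixes_root: "mob B (Fin r) = Fin r" if "(c * r + d) * (r + n) = a * r + b" for r
    unfolding B_def mob_fixed_iff[OF det_B] using that by (simp add: algebra_simps power2_eq_square)
  have "2 < \<bar>mtrace B\<bar>"
    using hyperbolic_if_two_fixed_points[OF det_B _ \<open>s \<noteq> t\<close>] fixes_root root_s root_t \<open>c \<noteq> 0\<close>
    by (simp add: B_def)
  then show "Fin s \<in> PA A" "Fin t \<in> PA A"
    unfolding PA_def using B fixes_root root_s root_t by blast+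
qed

lemma ex_HA_agreeing_with_mob:
  assumes A: "real_subring A" and M: "(a, b, c, d) \<in> SL2 A" and "c \<noteq> 0" and "c * x + d \<noteq> 0"
  shows "\<exists>g\<in>HA A. g (Fin x) = mob (a, b, c, d) (Fin x)"
proof -
  have det: "a * d - b * c = 1" using M by (simp add: SL2_def)
  \<comment> \<open>\<open>Q n y = c (c y + d) (y + n - M y)\<close>: its zeros solve \<open>M y = y + n\<close>, and it is affine in \<open>n\<close>\<close>
  define Q where "Q n y = c * ((c * y + d) * (y + n) - (a * y + b))" for n y
  have Q_quadratic: "Q n y = c\<^sup>2 * y\<^sup>2 + c * (c * n + d - a) * y + c * (d * n - b)" for n y
    by (simp add: Q_def algebra_simps power2_eq_square)
  obtain k :: int where "Q 0 x + of_int k * (c * (c * x + d)) < 0"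
    using ex_int_add_mult_neg[of "c * (c * x + d)"] \<open>c \<noteq> 0\<close> \<open>c * x + d \<noteq> 0\<close> by auto
  moreover define n where "n = real_of_int k"
  moreover have "Q n x = Q 0 x + n * (c * (c * x + d))" by (simp add: Q_def algebra_simps)
  ultimately have "Q n x < 0" by simp
  have "n \<in> A" using of_int_mem_real_subring[OF A] by (simp add: n_def)
  obtain s t where "s < x" "x < t" and split: "\<And>y. Q n y = c\<^sup>2 * (y - s) * (y - t)"
    using negative_quadratic_splits[of "c\<^sup>2" x "c * (c * n + d - a)" "c * (d * n - b)"]
      \<open>Q n x < 0\<close> \<open>c \<noteq> 0\<close> unfolding Q_quadratic by auto
  have roots: "Q n s = 0" "Q n t = 0" using split by simp_all
  have root_eq: "(c * r + d) * (r + n) = a * r + b" if "Q n r = 0" for r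
    using that \<open>c \<noteq> 0\<close> by (simp add: Q_def)
  have nonpos: "\<forall>y\<in>{s..t}. Q n y \<le> 0"
    unfolding split by (auto simp: mult.assoc mult_nonneg_nonpos mult_le_0_iff)
  have image: "mob (a, b, c, d) ` Fin ` {s..t} = Fin ` {s + n..t + n}"
    using mob_maps_interval_onto[OF det _ root_eq root_eq] nonpos roots by (simp add: Q_def)
  have ends: "mob (a, b, c, d) (Fin r) = Fin (r + n)" if "Q n r = 0" for r
  proof -
    have "c * r + d \<noteq> 0" using quadratic_at_pole[OF det, of r n] that by (metis Q_def zero_neq_one)
    then show ?thesis using root_eq[OF that] by (simp add: field_simps)
  qed
  have "s \<noteq> t" using \<open>s < x\<close> \<open>x < t\<close> by simp
  note PA = translation_fixed_points_in_PA[OF A M \<open>n \<in> A\<close> \<open>c \<noteq> 0\<close> this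
      root_eq[OF roots(1)] root_eq[OF roots(2)]]
  define g where "g z = (if z \<in> Fin ` {s..t} then mob (a, b, c, d) z else mob (1, n, 0, 1) z)" for z
  have "g \<in> HA A"
    using glued_translation_in_HA[OF A M \<open>n \<in> A\<close> _ PA image ends[OF roots(1)] ends[OF roots(2)]]
      \<open>s < x\<close> \<open>x < t\<close> unfolding g_def by simp
  moreover have "g (Fin x) = mob (a, b, c, d) (Fin x)"
    using \<open>s < x\<close> \<open>x < t\<close> by (simp add: g_def)
  ultimately show ?thesis by blast
qed

lemma ex_HA_agreeing_with_SL2:
  assumes A: "real_subring A" and M: "M \<in> SL2 A" and "mob M (Fin x) \<noteq> Inf"
  shows "\<exists>g\<in>HA A. g (Fin x) = mob M (Fin x)"
proof -
  obtain a b c d where M_eq: "M = (a, b, c, d)" by (cases M)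
  show ?thesis
  proof (cases "c = 0")
    case True
    then have "mob M \<in> HA A"
      using bij_mob_SL2[OF M] M by (auto simp: HA_def GA_def M_eq)
    then show ?thesis by blast
  next
    case False
    then show ?thesis
      using ex_HA_agreeing_with_mob[OF A] M \<open>mob M (Fin x) \<noteq> Inf\<close> by (auto simp: M_eq)
  qed
qed

text \<open>Seen from \<open>Fin x\<close>, the coordinate \<open>1 / (x - a)\<close> moves \<open>Fin x\<close> to \<open>Inf\<close>; an arc
  avoiding \<open>Fin x\<close> then becomes an increasing interval.\<close>
definition arc_coord :: "real \<Rightarrow> P1 \<Rightarrow> real" where
  "arc_coord x u = (case u of Inf \<Rightarrow> 0 | Fin a \<Rightarrow> 1 / (x - a))"

lemma arc_coord_le_if_Fin_notin_arc:
  assumes "Fin x \<notin> arc u v"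
  shows "arc_coord x u \<le> arc_coord x v"
proof (cases u; cases v)
  fix a b assume uv: "u = Fin a" "v = Fin b"
  show ?thesis
  proof (cases "a \<le> b")
    case True
    then have "x < a \<or> b < x" using assms uv by auto
    then have "1 / (x - a) \<le> 1 / (x - b)"
    proof
      assume "x < a"
      then show ?thesis using True by (intro divide_left_mono) (auto intro: mult_neg_neg)
    next
      assume "b < x"
      then show ?thesis using True by (intro divide_left_mono) (auto intro: mult_pos_pos)
    qed
    then show ?thesis using uv by (simp add: arc_coord_def)
  next
    case False
    then have "b < x" "x < a" using assms uv by auto
    then have "1 / (x - a) < 0" "0 < 1 / (x - b)" by simp_all
    then have "1 / (x - a) \<le> 1 / (x - b)" by linarith
    then show ?thesis using uv by (simp add: arc_coord_def)
  qed
qed (use assms in \<open>auto simp: arc_coord_def\<close>)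

lemma arc_coord_inj:
  assumes "arc_coord x u = arc_coord x v" "u \<noteq> Fin x" "v \<noteq> Fin x"
  shows "u = v"
  using assms by (cases u; cases v) (auto simp: arc_coord_def)

lemma left_end_in_arc: "u \<in> arc u v"
  by (cases u; cases v) auto

lemma Fin_in_some_arc:
  assumes "distinct ps" "2 \<le> length ps"
  shows "\<exists>i<length ps. Fin x \<in> arc (ps ! i) (ps ! (Suc i mod length ps))"
proof (rule ccontr)
  assume avoid: "\<not> ?thesis"
  define n where "n = length ps"
  have "2 \<le> n" using assms(2) by (simp add: n_def)
  define f where "f i = arc_coord x (ps ! i)" for i
  have mono_step: "f i \<le> f (Suc i mod n)" if "i < n" for i
    using avoid that arc_coord_le_if_Fin_notin_arc unfolding f_def n_def by blast
  \<comment> \<open>the coordinates never decrease around the cycle, so \<open>f 0 = f 1\<close>\<close>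
  have "f 1 \<le> f j" if "1 \<le> j" "j < n" for j
    using that(1)
  proof (induction rule: dec_induct)
    case (step i)
    then show ?case using mono_step[of i] that(2) by simp
  qed simp
  then have "f 1 \<le> f (n - 1)" using \<open>2 \<le> n\<close> by simp
  moreover have "f (n - 1) \<le> f 0" using mono_step[of "n - 1"] \<open>2 \<le> n\<close> by simp
  moreover have "f 0 \<le> f 1" using mono_step[of 0] \<open>2 \<le> n\<close> by simp
  ultimately have "f 0 = f 1" by linarith
  moreover have "ps ! i \<noteq> Fin x" if "i < n" for i
    using avoid left_end_in_arc that unfolding n_def by metis
  ultimately have "ps ! 0 = ps ! 1"
    using arc_coord_inj[of x "ps ! 0" "ps ! 1"] \<open>2 \<le> n\<close> unfolding f_def by simp
  moreover have "0 < length ps" "1 < length ps" using assms(2) by linarith+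
  then have "ps ! 0 \<noteq> ps ! 1" using nth_eq_iff_index_eq[OF assms(1)] by simp
  ultimately show False by simp
qed

lemma ex_SL2_agreeing_with_GA:
  assumes "g \<in> GA A"
  shows "\<exists>M\<in>SL2 A. g (Fin x) = mob M (Fin x)"
proof -
  from assms consider (global) "\<exists>M\<in>SL2 A. g = mob M"
    | (pieces) ps where "2 \<le> length ps" "distinct ps"
        "\<forall>i<length ps. \<exists>M\<in>SL2 A. \<forall>z\<in>arc (ps ! i) (ps ! (Suc i mod length ps)). g z = mob M z"
    unfolding GA_def by blast
  then show ?thesis
  proof cases
    case pieces
    then obtain i where "i < length ps" "Fin x \<in> arc (ps ! i) (ps ! (Suc i mod length ps))"
      using Fin_in_some_arc by blast
    with pieces(3) show ?thesis by blast
  qed auto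
qed

theorem proposition6:
  fixes A :: "real set" and p :: P1
  assumes "real_subring A" and "p \<noteq> Inf"
  shows "{mob M p | M. M \<in> SL2 A} \<subseteq> insert Inf {g p | g. g \<in> HA A}
     \<and> (\<forall>q. q \<noteq> Inf \<longrightarrow> ((\<exists>M\<in>SL2 A. mob M p = q) \<longleftrightarrow> (\<exists>g\<in>HA A. g p = q)))"
proof -
  obtain x where p: "p = Fin x" using assms(2) by (cases p) auto
  have to_HA: "\<exists>g\<in>HA A. g p = mob M p" if "M \<in> SL2 A" "mob M p \<noteq> Inf" for M
    using ex_HA_agreeing_with_SL2[OF assms(1) that[unfolded p]] p by simp
  have from_HA: "\<exists>M\<in>SL2 A. g p = mob M p" if "g \<in> HA A" for g
    using ex_SL2_agreeing_with_GA that p by (simp add: HA_def)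
  have "{mob M p | M. M \<in> SL2 A} \<subseteq> insert Inf {g p | g. g \<in> HA A}"
  proof
    fix w assume "w \<in> {mob M p | M. M \<in> SL2 A}"
    then obtain M where "M \<in> SL2 A" "w = mob M p" by blast
    then show "w \<in> insert Inf {g p | g. g \<in> HA A}" using to_HA[of M] by (cases "w = Inf") (auto, metis)
  qed
  moreover have "(\<exists>M\<in>SL2 A. mob M p = q) \<longleftrightarrow> (\<exists>g\<in>HA A. g p = q)" if "q \<noteq> Inf" for q
    using to_HA from_HA that by metis
  ultimately show ?thesis by blast
qed

end
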